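(* Let $\Omega\subset\mathbb{C}^n$ be an open connected subset and $f_m\colon\Omega\to\mathbb{C}^n$ ($m\in\mathbb{N}$) holomorphic maps converging locally uniformly to $\mathrm{id}|_\Omega\colon\Omega\to\mathbb{C}^n$. Let $D>0$ be an integer and assume there is a non-empty open relatively compact subset $\Omega'\subset\Omega$ such that $(f_m)^i(\overline{\Omega'})\subseteq\Omega$ for all iterates $i=1,\dots,D$ and all $m$, and $(f_m)^D=\mathrm{id}$ on $\Omega'$ for all $m$. Then $f_m=\mathrm{id}|_\Omega$ for all $m\gg0$. *)

theory Defs
  imports "HOL-Analysis.Analysis"
begin

definition complex_linear_vec :: "(complex^'n \<Rightarrow> complex^'m) \<Rightarrow> bool" where
  "complex_linear_vec L \<longleftrightarrow>
     (\<forall>x y. L (x + y) = L x + L y) \<and> (\<forall>c x. L (c *s x) = c *s L x)"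

definition holomorphic_vec_on :: "(complex^'n \<Rightarrow> complex^'m) \<Rightarrow> (complex^'n) set \<Rightarrow> bool" where
  "holomorphic_vec_on f S \<longleftrightarrow>
     (\<forall>z\<in>S. \<exists>L. complex_linear_vec L \<and> (f has_derivative L) (at z))"

definition locally_uniform_limit :: "'a::topological_space set \<Rightarrow> (nat \<Rightarrow> 'a \<Rightarrow> 'b::metric_space) \<Rightarrow> ('a \<Rightarrow> 'b) \<Rightarrow> bool" where
  "locally_uniform_limit S f g \<longleftrightarrow>
     (\<forall>x\<in>S. \<exists>U. open U \<and> x \<in> U \<and> U \<subseteq> S \<and> uniform_limit U f g sequentially)"

end

theory Submission
  imports Defs "HOL-Complex_Analysis.Complex_Analysis"
begin

(* Write h = f m - id. For large m, h is uniformly small on a fixed neighbourhood of closure \<Omega>'.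
   Every point w of the forward orbit P of \<Omega>' is D-periodic, so the displacements h ((f m ^^ i) w),
   i < D, telescope to zero and h w is the average of h w - h ((f m ^^ i) w). Restricting h to
   complex lines and applying Schwarz's lemma bounds these differences by a small multiple of
   |(f m ^^ i) w - w| <= D * sup_P |h|. Hence sup_P |h| <= sup_P |h| / 2, so f m = id on \<Omega>', and on
   all of \<Omega> by the identity theorem. *)

lemma norm_vector_smult_complex: "norm (c *s x) = norm c * norm (x :: complex^'n)"
  unfolding norm_vec_def by (simp add: norm_mult L2_set_right_distrib)

lemma bounded_linear_vector_smult_left: "bounded_linear (\<lambda>c::complex. c *s (v::complex^'n))"
  by (rule bounded_linear_intro[where K = "norm v"])
     (auto simp: norm_vector_smult_complex vector_sadd_rdistrib vec_eq_iff)

lemma holomorphic_vec_on_subset: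
  "holomorphic_vec_on F S \<Longrightarrow> T \<subseteq> S \<Longrightarrow> holomorphic_vec_on F T"
  unfolding holomorphic_vec_on_def by blast

lemma holomorphic_vec_on_diff_id:
  assumes "holomorphic_vec_on F S"
  shows "holomorphic_vec_on (\<lambda>y. F y - y) S"
  unfolding holomorphic_vec_on_def
proof
  fix z assume "z \<in> S"
  then obtain L where L: "complex_linear_vec L" "(F has_derivative L) (at z)"
    using assms unfolding holomorphic_vec_on_def by blast
  have "complex_linear_vec (\<lambda>h. L h - h)"
    using L(1) unfolding complex_linear_vec_def by (simp add: vector_ssub_ldistrib)
  moreover have "((\<lambda>y. F y - y) has_derivative (\<lambda>h. L h - h)) (at z)"
    by (intro has_derivative_diff L(2) has_derivative_ident)
  ultimately show "\<exists>L. complex_linear_vec L \<and> ((\<lambda>y. F y - y) has_derivative L) (at z)"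
    by blast
qed

lemma holomorphic_on_line_component:
  fixes F :: "complex^'n \<Rightarrow> complex^'m"
  assumes "holomorphic_vec_on F S"
  shows "(\<lambda>t. F (a + t *s v) $ j) holomorphic_on {t. a + t *s v \<in> S}"
proof -
  have "(\<lambda>t. F (a + t *s v) $ j) field_differentiable at t" if t: "a + t *s v \<in> S" for t
  proof -
    obtain L where L: "complex_linear_vec L" "(F has_derivative L) (at (a + t *s v))"
      using assms t unfolding holomorphic_vec_on_def by blast
    have "((\<lambda>t. a + t *s v) has_derivative (\<lambda>s. s *s v)) (at t)"
      by (auto intro!: derivative_eq_intros
          bounded_linear_imp_has_derivative[OF bounded_linear_vector_smult_left])
    from has_derivative_compose[OF this L(2)]
    have "((\<lambda>t. F (a + t *s v) $ j) has_derivative (\<lambda>s. L (s *s v) $ j)) (at t)"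
      by (rule bounded_linear.has_derivative[OF bounded_linear_vec_nth])
    moreover have "(\<lambda>s. L (s *s v) $ j) = (\<lambda>s. s * L v $ j)"
      using L(1) unfolding complex_linear_vec_def by simp
    ultimately show ?thesis
      unfolding field_differentiable_def has_field_derivative_def
      by (intro exI[of _ "L v $ j"]) (simp add: mult.commute[of _ "L v $ j"])
  qed
  then show ?thesis
    unfolding holomorphic_on_def using field_differentiable_at_within by blast
qed

lemma Schwarz_Lemma_diff_bound:
  fixes g :: "complex \<Rightarrow> complex"
  assumes hol: "g holomorphic_on ball 0 R"
    and bound: "\<And>t. t \<in> ball 0 R \<Longrightarrow> norm (g t) \<le> \<eta>"
    and z: "z \<in> ball 0 R"
  shows "norm (g z - g 0) \<le> 3 * \<eta> * norm z / R"
proof -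
  have R: "R > 0"
    using z by (auto intro: le_less_trans[OF norm_ge_zero])
  then have "0 \<in> ball (0::complex) R"
    by simp
  then have "\<eta> \<ge> 0"
    using bound norm_ge_zero order_trans by blast
  show ?thesis
  proof (cases "\<eta> = 0")
    case True
    then show ?thesis
      using bound[OF z] bound[OF \<open>0 \<in> ball 0 R\<close>] by simp
  next
    case False
    with \<open>\<eta> \<ge> 0\<close> have "\<eta> > 0" by simp
    \<comment> \<open>3\<eta> rather than 2\<eta>: Schwarz's lemma needs the strict bound |G| < 1.\<close>
    define G where "G s = (g (of_real R * s) - g 0) / of_real (3 * \<eta>)" for s
    have scaled: "of_real R * s \<in> ball 0 R" if "norm s < 1" for s :: complex
      using that R by (simp add: norm_mult)
    have "(\<lambda>s. g (of_real R * s)) holomorphic_on ball 0 1"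
      using scaled by (intro holomorphic_on_compose_gen[OF _ hol, unfolded o_def])
        (auto intro: holomorphic_intros)
    then have "G holomorphic_on ball 0 1"
      unfolding G_def using \<open>\<eta> > 0\<close> by (intro holomorphic_intros) auto
    moreover have "G 0 = 0"
      by (simp add: G_def)
    moreover have "norm (G s) < 1" if "norm s < 1" for s
    proof -
      have "norm (g (of_real R * s) - g 0) \<le> 2 * \<eta>"
        using bound[OF scaled[OF that]] bound[OF \<open>0 \<in> ball 0 R\<close>]
          norm_triangle_ineq4[of "g (of_real R * s)" "g 0"]
        by linarith
      then show ?thesis
        using \<open>\<eta> > 0\<close> unfolding G_def by (simp add: norm_divide)
    qed
    moreover have "norm (z / of_real R) < 1"
      using z R by (simp add: norm_divide)
    ultimately have "norm (G (z / of_real R)) \<le> norm (z / of_real R)"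
      by (rule Schwarz_Lemma(1))
    then show ?thesis
      using R \<open>\<eta> > 0\<close> unfolding G_def by (simp add: norm_divide field_simps)
  qed
qed

lemma holomorphic_vec_on_norm_diff_le:
  fixes F :: "complex^'n \<Rightarrow> complex^'m"
  assumes hol: "holomorphic_vec_on F S" and sub: "ball w \<rho> \<subseteq> S"
    and bound: "\<And>y. y \<in> ball w \<rho> \<Longrightarrow> norm (F y) \<le> \<eta>"
    and b: "b \<in> ball w \<rho>"
  shows "norm (F b - F w) \<le> CARD('m) * (3 * \<eta> * dist b w / \<rho>)"
proof -
  have "\<rho> > 0"
    using b by (auto intro: le_less_trans[OF zero_le_dist])
  then have "\<eta> \<ge> 0"
    using bound[of w] norm_ge_zero order_trans by (metis centre_in_ball)
  show ?thesis
  proof (cases "b = w")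
    case True
    with \<open>\<rho> > 0\<close> \<open>\<eta> \<ge> 0\<close> show ?thesis by simp
  next
    case False
    define v where "v = b - w"
    have v: "norm v > 0" "norm v < \<rho>"
      using False b by (auto simp: v_def dist_norm norm_minus_commute)
    define R where "R = \<rho> / norm v"
    have line: "w + t *s v \<in> ball w \<rho>" if "t \<in> ball 0 R" for t
      using that v by (simp add: R_def dist_norm norm_vector_smult_complex field_simps)
    have component: "norm ((F b - F w) $ j) \<le> 3 * \<eta> * dist b w / \<rho>" for j
    proof -
      let ?g = "\<lambda>t. F (w + t *s v) $ j"
      have "?g holomorphic_on ball 0 R"
        using holomorphic_on_line_component[OF hol] by (rule holomorphic_on_subset) (use line sub in auto)
      moreover have "norm (?g t) \<le> \<eta>" if "t \<in> ball 0 R" for t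
        using Finite_Cartesian_Product.norm_nth_le[of "F (w + t *s v)" j] bound[OF line[OF that]]
        by linarith
      moreover have "1 \<in> ball (0::complex) R"
        using v by (simp add: R_def)
      ultimately have "norm (?g 1 - ?g 0) \<le> 3 * \<eta> * norm (1::complex) / R"
        by (rule Schwarz_Lemma_diff_bound)
      then show ?thesis
        using v by (simp add: v_def R_def dist_norm)
    qed
    have "norm (F b - F w) \<le> (\<Sum>j\<in>UNIV. norm ((F b - F w) $ j))"
      unfolding norm_vec_def by (rule L2_set_le_sum) auto
    also have "\<dots> \<le> CARD('m) * (3 * \<eta> * dist b w / \<rho>)"
      using sum_mono[of UNIV, OF component] by simp
    finally show ?thesis .
  qed
qed

lemma holomorphic_vec_analytic_continuation_convex:
  fixes F :: "complex^'n \<Rightarrow> complex^'m"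
  assumes hol: "holomorphic_vec_on F S" and "open S" "convex S"
    and "x \<in> S" and "e > 0" and vanish: "\<And>y. y \<in> ball x e \<Longrightarrow> F y = 0"
    and "y \<in> S"
  shows "F y = 0"
proof -
  define v where "v = y - x"
  define T where "T = (\<lambda>t. x + t *s v) -` S"
  define U where "U = (\<lambda>t. x + t *s v) -` (S \<inter> ball x e)"
  have cont: "isCont (\<lambda>t. x + t *s v) t" for t
    by (intro continuous_add continuous_const linear_continuous_at bounded_linear_vector_smult_left)
  have "open T" "open U"
    unfolding T_def U_def using \<open>open S\<close> by (auto intro!: continuous_open_vimage cont)
  have "T = (\<lambda>t. t *s v) -` ((+) (- x) ` S)"
    unfolding T_def
  proof (intro set_eqI iffI)
    fix t assume "t \<in> (\<lambda>t. x + t *s v) -` S"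
    then show "t \<in> (\<lambda>t. t *s v) -` ((+) (- x) ` S)"
      by (auto intro!: image_eqI[of _ _ "x + t *s v"])
  qed auto
  then have "convex T"
    by (metis convex_linear_vimage bounded_linear.linear bounded_linear_vector_smult_left
        convex_translation \<open>convex S\<close>)
  then have "connected T"
    by (rule convex_connected)
  have "0 \<in> T" "1 \<in> T" "0 \<in> U" "U \<subseteq> T"
    using \<open>x \<in> S\<close> \<open>y \<in> S\<close> \<open>e > 0\<close> by (auto simp: T_def U_def v_def)
  have "0 islimpt U"
    using \<open>open U\<close> \<open>0 \<in> U\<close> by (simp add: interior_open interior_limit_point)
  have "F (x + 1 *s v) $ j = 0" for j
  proof (rule analytic_continuation[of "\<lambda>t. F (x + t *s v) $ j" T U 0])
    show "(\<lambda>t. F (x + t *s v) $ j) holomorphic_on T"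
      unfolding T_def vimage_def by (rule holomorphic_on_line_component[OF hol])
  qed (use \<open>open T\<close> \<open>connected T\<close> \<open>U \<subseteq> T\<close> \<open>0 \<in> T\<close> \<open>0 islimpt U\<close> \<open>1 \<in> T\<close> vanish in
      \<open>auto simp: U_def\<close>)
  then show ?thesis
    by (simp add: v_def vec_eq_iff)
qed

lemma holomorphic_vec_analytic_continuation:
  fixes F :: "complex^'n \<Rightarrow> complex^'m"
  assumes hol: "holomorphic_vec_on F S" and "open S" "connected S"
    and "open U" "U \<noteq> {}" "U \<subseteq> S" and vanish: "\<And>y. y \<in> U \<Longrightarrow> F y = 0"
    and "z \<in> S"
  shows "F z = 0"
proof -
  define vanishes_near where "vanishes_near p \<longleftrightarrow> (\<exists>e>0. \<forall>y\<in>ball p e. F y = 0)" for p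
  obtain u where "u \<in> U"
    using \<open>U \<noteq> {}\<close> by blast
  then obtain e where "e > 0" "ball u e \<subseteq> U"
    using \<open>open U\<close> open_contains_ball by blast
  then have "vanishes_near u"
    using vanish by (auto simp: vanishes_near_def)
  have "u \<in> S"
    using \<open>u \<in> U\<close> \<open>U \<subseteq> S\<close> by blast
  have "vanishes_near z"
  proof (rule connected_induction_simple[where P = vanishes_near, OF \<open>connected S\<close> \<open>u \<in> S\<close> \<open>z \<in> S\<close> \<open>vanishes_near u\<close>])
    fix a assume "a \<in> S"
    then obtain d where "d > 0" and ball_a: "ball a d \<subseteq> S"
      using \<open>open S\<close> open_contains_ball by blast
    have propagate: "vanishes_near q" if "p \<in> ball a d" "q \<in> ball a d" "vanishes_near p" for p q
    proof -
      obtain e where "e > 0" and e: "\<forall>y\<in>ball p e. F y = 0"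
        using \<open>vanishes_near p\<close> by (auto simp: vanishes_near_def)
      have "F y = 0" if "y \<in> ball a d" for y
        by (rule holomorphic_vec_analytic_continuation_convex[OF holomorphic_vec_on_subset[OF hol ball_a]
              open_ball convex_ball \<open>p \<in> ball a d\<close> \<open>e > 0\<close>]) (use e that in auto)
      moreover have "ball q (d - dist a q) \<subseteq> ball a d"
        by (simp add: ball_subset_ball_iff dist_commute)
      moreover have "d - dist a q > 0"
        using \<open>q \<in> ball a d\<close> by simp
      ultimately show ?thesis
        unfolding vanishes_near_def by blast
    qed
    show "\<exists>T. openin (top_of_set S) T \<and> a \<in> T \<and> (\<forall>x\<in>T. \<forall>y\<in>T. vanishes_near x \<longrightarrow> vanishes_near y)"
    proof (intro exI conjI)
      show "openin (top_of_set S) (ball a d)"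
        using ball_a by (simp add: open_subset)
      show "a \<in> ball a d"
        using \<open>d > 0\<close> by simp
      show "\<forall>x\<in>ball a d. \<forall>y\<in>ball a d. vanishes_near x \<longrightarrow> vanishes_near y"
        using propagate by blast
    qed
  qed
  then obtain e where "e > 0" "\<forall>y\<in>ball z e. F y = 0"
    unfolding vanishes_near_def by blast
  then show ?thesis
    by (metis centre_in_ball)
qed

lemma locally_uniform_limit_imp_uniform_limit_compact:
  assumes "locally_uniform_limit S f g" and "compact C" and "C \<subseteq> S"
  shows "uniform_limit C f g sequentially"
proof -
  have "\<forall>x\<in>S. \<exists>U. open U \<and> x \<in> U \<and> uniform_limit U f g sequentially"
    using assms(1) unfolding locally_uniform_limit_def by blast
  then obtain U where U: "\<And>x. x \<in> S \<Longrightarrow> open (U x) \<and> x \<in> U x \<and> uniform_limit (U x) f g sequentially"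
    by metis
  obtain C' where "C' \<subseteq> C" "finite C'" "C \<subseteq> (\<Union>x\<in>C'. U x)"
  proof (rule compactE_image[OF \<open>compact C\<close>])
    show "open (U x)" if "x \<in> C" for x
      using U \<open>C \<subseteq> S\<close> that by blast
    show "C \<subseteq> (\<Union>x\<in>C. U x)"
      using U \<open>C \<subseteq> S\<close> by blast
  qed blast
  have "uniform_limit (\<Union>x\<in>C'. U x) f g sequentially"
    using \<open>finite C'\<close> by (rule uniform_limit_on_UNION) (use U \<open>C' \<subseteq> C\<close> \<open>C \<subseteq> S\<close> in blast)
  then show ?thesis
    using \<open>C \<subseteq> (\<Union>x\<in>C'. U x)\<close> by (rule uniform_limit_on_subset)
qed

lemma compact_UN_cball:
  fixes K :: "'a::{real_normed_vector, heine_borel} set"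
  assumes "compact K"
  shows "compact (\<Union>x\<in>K. cball x r)"
proof -
  have "(\<Union>x\<in>K. cball x r) = (\<Union>x\<in>K. \<Union>y\<in>cball 0 r. {x + y})"
  proof (intro set_eqI iffI)
    fix z assume "z \<in> (\<Union>x\<in>K. cball x r)"
    then obtain x where "x \<in> K" "dist x z \<le> r"
      by auto
    moreover have "z = x + (z - x)" and "z - x \<in> cball 0 r"
      using \<open>dist x z \<le> r\<close> by (auto simp: dist_norm norm_minus_commute)
    ultimately show "z \<in> (\<Union>x\<in>K. \<Union>y\<in>cball 0 r. {x + y})"
      by blast
  next
    fix z assume "z \<in> (\<Union>x\<in>K. \<Union>y\<in>cball 0 r. {x + y})"
    then obtain x y where "x \<in> K" "norm y \<le> r" "z = x + y"
      by auto
    moreover from this have "dist x z \<le> r"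
      by (simp add: dist_norm)
    ultimately show "z \<in> (\<Union>x\<in>K. cball x r)"
      by auto
  qed
  then show ?thesis
    using compact_sums'[OF assms compact_cball] by simp
qed

lemma dist_funpow_le:
  fixes F :: "'a::metric_space \<Rightarrow> 'a"
  assumes "\<And>j. j < k \<Longrightarrow> dist (F ((F^^j) x)) ((F^^j) x) \<le> \<delta>"
  shows "dist ((F^^k) x) x \<le> k * \<delta>"
  using assms
proof (induction k)
  case (Suc k)
  have "dist ((F^^Suc k) x) x \<le> dist (F ((F^^k) x)) ((F^^k) x) + dist ((F^^k) x) x"
    by (simp add: dist_triangle)
  also have "\<dots> \<le> \<delta> + k * \<delta>"
    using Suc by (intro add_mono) auto
  finally show ?case
    by (simp add: algebra_simps)
qed simp

lemma dist_funpow_le_of_near_id: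
  fixes F :: "'a::metric_space \<Rightarrow> 'a"
  assumes "\<And>y. y \<in> cball x (k * \<delta>) \<Longrightarrow> dist (F y) y \<le> \<delta>" and "\<delta> \<ge> 0"
  shows "dist ((F^^k) x) x \<le> k * \<delta>"
  using assms(1)
proof (induction k)
  case (Suc k)
  have "k * \<delta> \<le> Suc k * \<delta>"
    using \<open>\<delta> \<ge> 0\<close> by (simp add: algebra_simps)
  then have "dist ((F^^k) x) x \<le> k * \<delta>"
    using Suc by (meson mem_cball order_trans)
  moreover from this have "dist (F ((F^^k) x)) ((F^^k) x) \<le> \<delta>"
    using Suc.prems \<open>k * \<delta> \<le> Suc k * \<delta>\<close> by (simp add: dist_commute)
  ultimately show ?case
    using dist_triangle[of "(F^^Suc k) x" x "(F^^k) x"] by (simp add: algebra_simps)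
qed simp

lemma norm_displacement_le_orbit_oscillation:
  fixes F :: "'a::real_normed_vector \<Rightarrow> 'a"
  assumes periodic: "(F^^D) x = x" and "D > 0"
    and oscillation: "\<And>i. i < D \<Longrightarrow> norm ((F x - x) - (F ((F^^i) x) - (F^^i) x)) \<le> c"
  shows "norm (F x - x) \<le> c"
proof -
  define h where "h y = F y - y" for y
  have "(\<Sum>i<D. h ((F^^i) x)) = (\<Sum>i<D. (F^^Suc i) x - (F^^i) x)"
    by (simp add: h_def)
  also have "\<dots> = (F^^D) x - (F^^0) x"
    by (rule sum_lessThan_telescope)
  also have "\<dots> = 0"
    using periodic by simp
  finally have "real D *\<^sub>R h x = (\<Sum>i<D. h x - h ((F^^i) x))"
    by (simp add: sum_subtractf sum_constant_scaleR)
  then have "real D * norm (h x) \<le> (\<Sum>i<D. norm (h x - h ((F^^i) x)))"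
    by (metis abs_of_nat norm_scaleR norm_sum)
  also have "\<dots> \<le> real D * c"
    using sum_mono[of "{..<D}", OF oscillation] by (simp add: h_def)
  finally show ?thesis
    using \<open>D > 0\<close> by (simp add: h_def)
qed

lemma holomorphic_periodic_displacement_bound_halves:
  fixes F :: "complex^'n \<Rightarrow> complex^'n" and \<rho> \<eta> S :: real
  assumes hol: "holomorphic_vec_on F \<Omega>" and "\<rho> > 0" and "D > 0"
    and nbhd: "\<And>w. w \<in> P \<Longrightarrow> ball w \<rho> \<subseteq> \<Omega>"
    and near_id: "\<And>w y. w \<in> P \<Longrightarrow> y \<in> ball w \<rho> \<Longrightarrow> norm (F y - y) \<le> \<eta>"
    and small: "6 * CARD('n) * D * \<eta> \<le> \<rho>"
    and invariant: "\<And>w. w \<in> P \<Longrightarrow> F w \<in> P"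
    and periodic: "\<And>w. w \<in> P \<Longrightarrow> (F^^D) w = w"
    and bound: "\<And>w. w \<in> P \<Longrightarrow> norm (F w - w) \<le> S" and "S \<le> \<eta>"
    and "w \<in> P"
  shows "norm (F w - w) \<le> S / 2"
proof (rule norm_displacement_le_orbit_oscillation[OF periodic[OF \<open>w \<in> P\<close>] \<open>D > 0\<close>])
  fix i assume "i < D"
  define b where "b = (F^^i) w"
  have "S \<ge> 0"
    using bound[OF \<open>w \<in> P\<close>] by (meson norm_ge_zero order_trans)
  have orbit: "(F^^j) w \<in> P" for j
    by (induction j) (use \<open>w \<in> P\<close> invariant in auto)
  have "dist b w \<le> i * S"
    unfolding b_def using bound orbit by (intro dist_funpow_le) (simp add: dist_norm)
  also have "\<dots> \<le> D * S"
    using \<open>i < D\<close> \<open>S \<ge> 0\<close> by (intro mult_right_mono) auto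
  finally have "dist b w \<le> D * S" .
  have "\<eta> \<ge> 0"
    using \<open>S \<ge> 0\<close> \<open>S \<le> \<eta>\<close> by simp
  have "D * S \<le> D * \<eta>"
    using \<open>S \<le> \<eta>\<close> by (intro mult_left_mono) auto
  moreover have "D * \<eta> \<le> CARD('n) * (D * \<eta>)"
    using mult_right_mono[of 1 "real CARD('n)" "D * \<eta>"] \<open>\<eta> \<ge> 0\<close> by (simp add: Suc_le_eq)
  moreover have "6 * (CARD('n) * (D * \<eta>)) \<le> \<rho>"
    using small by (simp add: algebra_simps)
  ultimately have "dist b w < \<rho>"
    using \<open>dist b w \<le> D * S\<close> \<open>\<rho> > 0\<close> by linarith
  then have "b \<in> ball w \<rho>"
    by (simp add: dist_commute)
  have "norm ((F b - b) - (F w - w)) \<le> CARD('n) * (3 * \<eta> * dist b w / \<rho>)"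
    by (rule holomorphic_vec_on_norm_diff_le[OF holomorphic_vec_on_diff_id[OF hol] nbhd[OF \<open>w \<in> P\<close>]])
      (use near_id[OF \<open>w \<in> P\<close>] \<open>b \<in> ball w \<rho>\<close> in auto)
  also have "\<dots> \<le> CARD('n) * (3 * \<eta> * (D * S) / \<rho>)"
    using \<open>dist b w \<le> D * S\<close> \<open>S \<ge> 0\<close> \<open>S \<le> \<eta>\<close> \<open>\<rho> > 0\<close>
    by (intro mult_left_mono divide_right_mono) auto
  also have "\<dots> = (6 * CARD('n) * D * \<eta>) * S / (2 * \<rho>)"
    by (simp add: field_simps)
  also have "\<dots> \<le> \<rho> * S / (2 * \<rho>)"
    using small \<open>S \<ge> 0\<close> \<open>\<rho> > 0\<close> by (intro divide_right_mono mult_right_mono) auto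
  finally show "norm ((F w - w) - (F ((F^^i) w) - (F^^i) w)) \<le> S / 2"
    using \<open>\<rho> > 0\<close> by (simp add: b_def norm_minus_commute)
qed

lemma holomorphic_periodic_invariant_set_fixed:
  fixes F :: "complex^'n \<Rightarrow> complex^'n" and \<rho> \<eta> :: real
  assumes hol: "holomorphic_vec_on F \<Omega>" and "\<rho> > 0" and "D > 0"
    and nbhd: "\<And>w. w \<in> P \<Longrightarrow> ball w \<rho> \<subseteq> \<Omega>"
    and near_id: "\<And>w y. w \<in> P \<Longrightarrow> y \<in> ball w \<rho> \<Longrightarrow> norm (F y - y) \<le> \<eta>"
    and small: "6 * CARD('n) * D * \<eta> \<le> \<rho>"
    and invariant: "\<And>w. w \<in> P \<Longrightarrow> F w \<in> P"
    and periodic: "\<And>w. w \<in> P \<Longrightarrow> (F^^D) w = w"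
    and "x \<in> P"
  shows "F x = x"
proof -
  define S where "S = (SUP w\<in>P. norm (F w - w))"
  have near_id_P: "norm (F w - w) \<le> \<eta>" if "w \<in> P" for w
    using near_id[OF that, of w] \<open>\<rho> > 0\<close> by simp
  then have "bdd_above ((\<lambda>w. norm (F w - w)) ` P)"
    by (intro bdd_aboveI2)
  then have bound: "norm (F w - w) \<le> S" if "w \<in> P" for w
    unfolding S_def using that by (intro cSUP_upper)
  have "S \<le> \<eta>"
    unfolding S_def using \<open>x \<in> P\<close> near_id_P by (intro cSUP_least) auto
  have "norm (F w - w) \<le> S / 2" if "w \<in> P" for w
    by (rule holomorphic_periodic_displacement_bound_halves[OF hol \<open>\<rho> > 0\<close> \<open>D > 0\<close> nbhd near_id
          small invariant periodic bound \<open>S \<le> \<eta>\<close> that])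
  then have "S \<le> S / 2"
    using \<open>x \<in> P\<close> unfolding S_def by (intro cSUP_least) auto
  then have "norm (F x - x) \<le> 0"
    using bound[OF \<open>x \<in> P\<close>] by linarith
  then show ?thesis
    by simp
qed

lemma holomorphic_periodic_near_identity_fixed:
  fixes F :: "complex^'n \<Rightarrow> complex^'n" and \<rho> \<eta> :: real
  assumes hol: "holomorphic_vec_on F \<Omega>" and "\<rho> > 0" and "D > 0"
    and nbhd: "\<And>z. z \<in> Z \<Longrightarrow> cball z \<rho> \<subseteq> \<Omega>"
    and near_id: "\<And>z y. z \<in> Z \<Longrightarrow> y \<in> cball z \<rho> \<Longrightarrow> norm (F y - y) \<le> \<eta>"
    and small: "9 * CARD('n) * D * \<eta> \<le> \<rho>"
    and periodic: "\<And>z. z \<in> Z \<Longrightarrow> (F^^D) z = z"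
    and "x \<in> Z"
  shows "F x = x"
proof -
  define P where "P = (\<Union>k. (F^^k) ` Z)"
  have "norm (F x - x) \<le> \<eta>"
    using near_id[OF \<open>x \<in> Z\<close>, of x] \<open>\<rho> > 0\<close> by simp
  then have "\<eta> \<ge> 0"
    by (meson norm_ge_zero order_trans)
  have "D * \<eta> \<le> CARD('n) * (D * \<eta>)"
    using mult_right_mono[of 1 "real CARD('n)" "D * \<eta>"] \<open>\<eta> \<ge> 0\<close> by (simp add: Suc_le_eq)
  moreover have "9 * (CARD('n) * (D * \<eta>)) \<le> \<rho>"
    using small by (simp add: algebra_simps)
  ultimately have "D * \<eta> \<le> \<rho> / 3"
    using \<open>\<rho> > 0\<close> by linarith
  have near_Z: "\<exists>z\<in>Z. dist w z \<le> \<rho> / 3" if "w \<in> P" for w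
  proof -
    obtain z k where "z \<in> Z" and w: "w = (F^^(k mod D)) z"
      using \<open>w \<in> P\<close> funpow_mod_eq[OF periodic] by (auto simp: P_def)
    have "real (k mod D) * \<eta> \<le> D * \<eta>"
      using \<open>D > 0\<close> \<open>\<eta> \<ge> 0\<close> by (intro mult_right_mono) auto
    have "dist w z \<le> (k mod D) * \<eta>"
      unfolding w
    proof (rule dist_funpow_le_of_near_id[OF _ \<open>\<eta> \<ge> 0\<close>])
      fix y assume "y \<in> cball z ((k mod D) * \<eta>)"
      then have "y \<in> cball z \<rho>"
        using \<open>real (k mod D) * \<eta> \<le> D * \<eta>\<close> \<open>D * \<eta> \<le> \<rho> / 3\<close> \<open>\<rho> > 0\<close> by auto
      then show "dist (F y) y \<le> \<eta>"
        using near_id[OF \<open>z \<in> Z\<close>] by (simp add: dist_norm)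
    qed
    then show ?thesis
      using \<open>z \<in> Z\<close> \<open>real (k mod D) * \<eta> \<le> D * \<eta>\<close> \<open>D * \<eta> \<le> \<rho> / 3\<close> by force
  qed
  have ball_in_cball: "\<exists>z\<in>Z. ball w (2 * \<rho> / 3) \<subseteq> cball z \<rho>" if "w \<in> P" for w
  proof -
    obtain z where "z \<in> Z" "dist w z \<le> \<rho> / 3"
      using near_Z[OF \<open>w \<in> P\<close>] by blast
    have "ball w (2 * \<rho> / 3) \<subseteq> cball z \<rho>"
    proof
      fix y assume "y \<in> ball w (2 * \<rho> / 3)"
      then have "dist w y < 2 * \<rho> / 3"
        by simp
      moreover have "dist z w \<le> \<rho> / 3"
        using \<open>dist w z \<le> \<rho> / 3\<close> by (simp add: dist_commute)
      ultimately have "dist z y \<le> \<rho>"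
        using dist_triangle[of z y w] by linarith
      then show "y \<in> cball z \<rho>"
        by simp
    qed
    with \<open>z \<in> Z\<close> show ?thesis
      by blast
  qed
  show ?thesis
  proof (rule holomorphic_periodic_invariant_set_fixed[OF hol _ \<open>D > 0\<close>, of "2 * \<rho> / 3" P \<eta>])
    show "2 * \<rho> / 3 > 0"
      using \<open>\<rho> > 0\<close> by simp
    show "6 * CARD('n) * D * \<eta> \<le> 2 * \<rho> / 3"
      using small by (simp add: algebra_simps)
    show "x \<in> P"
      unfolding P_def by (rule UN_I[of 0]) (use \<open>x \<in> Z\<close> in simp_all)
  next
    fix w assume "w \<in> P"
    then obtain z k where "z \<in> Z" and w: "w = (F^^k) z"
      by (auto simp: P_def)
    show "F w \<in> P"
      unfolding P_def w by (rule UN_I[of "Suc k"]) (use \<open>z \<in> Z\<close> in simp_all)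
    have "(F^^D) w = (F^^k) ((F^^D) z)"
      unfolding w by (metis add.commute comp_apply funpow_add)
    then show "(F^^D) w = w"
      using periodic[OF \<open>z \<in> Z\<close>] w by simp
    obtain z' where "z' \<in> Z" and ball_w: "ball w (2 * \<rho> / 3) \<subseteq> cball z' \<rho>"
      using ball_in_cball[OF \<open>w \<in> P\<close>] by blast
    then show "ball w (2 * \<rho> / 3) \<subseteq> \<Omega>"
      using nbhd by blast
    show "norm (F y - y) \<le> \<eta>" if "y \<in> ball w (2 * \<rho> / 3)" for y
      using near_id[OF \<open>z' \<in> Z\<close>] ball_w that by blast
  qed
qed

theorem proposition3p8:
  fixes \<Omega> \<Omega>' :: "(complex^'n) set"
    and f :: "nat \<Rightarrow> complex^'n \<Rightarrow> complex^'n"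
    and D :: nat
  assumes "open \<Omega>" and "connected \<Omega>"
    and "\<And>m. holomorphic_vec_on (f m) \<Omega>"
    and "locally_uniform_limit \<Omega> f id"
    and "D > 0"
    and "open \<Omega>'" and "\<Omega>' \<noteq> {}"
    and "compact (closure \<Omega>')" and "closure \<Omega>' \<subseteq> \<Omega>"
    and "\<And>m i. 1 \<le> i \<Longrightarrow> i \<le> D \<Longrightarrow> (f m ^^ i) ` closure \<Omega>' \<subseteq> \<Omega>"
    and "\<And>m z. z \<in> \<Omega>' \<Longrightarrow> (f m ^^ D) z = z"
  shows "\<exists>M. \<forall>m\<ge>M. \<forall>z\<in>\<Omega>. f m z = z"
proof -
  obtain \<rho> where "\<rho> > 0" and nbhd: "(\<Union>z\<in>closure \<Omega>'. cball z \<rho>) \<subseteq> \<Omega>"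
    using compact_subset_open_imp_cball_epsilon_subset[OF assms(8,1,9)] by blast
  define \<eta> where "\<eta> = \<rho> / (9 * CARD('n) * D)"
  have "\<eta> > 0" and small: "9 * CARD('n) * D * \<eta> \<le> \<rho>"
    using \<open>\<rho> > 0\<close> \<open>D > 0\<close> by (auto simp: \<eta>_def)
  have "uniform_limit (\<Union>z\<in>closure \<Omega>'. cball z \<rho>) f id sequentially"
    using assms(4,8) nbhd by (intro locally_uniform_limit_imp_uniform_limit_compact compact_UN_cball)
  from uniform_limitD[OF this \<open>\<eta> > 0\<close>] obtain M
    where M: "\<And>m z y. m \<ge> M \<Longrightarrow> z \<in> closure \<Omega>' \<Longrightarrow> y \<in> cball z \<rho> \<Longrightarrow> dist (f m y) y < \<eta>"
    unfolding eventually_sequentially id_def by blast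
  have "\<Omega>' \<subseteq> closure \<Omega>'" "\<Omega>' \<subseteq> \<Omega>"
    using assms(9) closure_subset by auto
  have "f m z = z" if "m \<ge> M" and "z \<in> \<Omega>" for m z
  proof -
    have near_id: "norm (f m y - y) \<le> \<eta>" if "x \<in> \<Omega>'" and "y \<in> cball x \<rho>" for x y
      using M[OF \<open>m \<ge> M\<close>, of x y] that \<open>\<Omega>' \<subseteq> closure \<Omega>'\<close> by (auto simp: dist_norm)
    have "f m x = x" if "x \<in> \<Omega>'" for x
      by (rule holomorphic_periodic_near_identity_fixed[OF assms(3) \<open>\<rho> > 0\<close> \<open>D > 0\<close> _ near_id small
            assms(11) that]) (use nbhd \<open>\<Omega>' \<subseteq> closure \<Omega>'\<close> in \<open>auto simp: UN_subset_iff\<close>)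
    then have "f m z - z = 0"
      by (intro holomorphic_vec_analytic_continuation[OF holomorphic_vec_on_diff_id[OF assms(3)]
            assms(1,2,6,7) \<open>\<Omega>' \<subseteq> \<Omega>\<close> _ \<open>z \<in> \<Omega>\<close>]) simp
    then show ?thesis
      by simp
  qed
  then show ?thesis
    by blast
qed

end
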